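(* Suppose $0<\delta < \frac{8}{5} g^{-k-3} k^{-2}$. Then for every $\vec \theta \in R_{\delta}^A$ we have $|\Phi(\vec \theta)| \leq 1 - \frac{1}{10} g^{-k-2}$.
   Context: Let $g\ge 2$, $k\ge 2$ be integers, $\mathbb Z_g$ the integers mod $g$, and $d=\binom{k}{2}(g-1)$. Index the coordinates of $\mathbb R^d$ by pairs $(\{i,j\},a)$ with $1\le i<j\le k$ and $a\in\mathbb Z_g\setminus\{0\}$. Define $Z:(\mathbb Z_g)^k\to\mathbb R^d$ by $[Z(\vec x)]_{\{i,j\},a}=1-1/g$ if $x_i-x_j=a$ and $-1/g$ otherwise. Define $\Phi(\vec\theta)=\sum_{\vec x\in(\mathbb Z_g)^k} g^{-k}e^{i\vec\theta\cdot Z(\vec x)}$, $\Lambda=\{\vec\theta\in\mathbb R^d: |\Phi(\vec\theta)|=1\}$, $\Lambda_0=\Lambda\cap[-\pi,\pi)^d$. For $\vec\theta\in[-\pi,\pi)^d$ and $\delta>0$ let $B_\delta(\vec\theta)=\{\vec\mu\in[-\pi,\pi)^d: \vec\mu\equiv\vec\theta+\vec\zeta \pmod{2\pi}$ componentwise, for some $\vec\zeta$ with $|\zeta_{\{i,j\},a}|<\delta$ for all coordinates$\}$. Let $L=\{\vec\theta\in[-\pi,\pi)^d: \theta_{\{i,j\},a}\equiv 0 \pmod{2\pi/g}$ for all coordinates$\}$ and $R_\delta^A=\bigcup_{\vec\eta\in L\setminus\Lambda_0}B_\delta(\vec\eta)$. *)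

theory Defs
  imports "HOL-Analysis.Analysis"
begin

text \<open>Coordinates of R^d are indexed by triples (i,j,a) with 1 <= i < j <= k and
  a in {1..g-1} (the nonzero residues mod g). Vectors are real-valued functions
  on this index set.\<close>

definition coord_idx :: "nat \<Rightarrow> nat \<Rightarrow> (nat \<times> nat \<times> nat) set" where
  "coord_idx g k = {(i, j, a). 1 \<le> i \<and> i < j \<and> j \<le> k \<and> 1 \<le> a \<and> a \<le> g - 1}"

text \<open>Elements of (Z_g)^k: functions on {1..k} with values in {0..<g} (representatives).\<close>
definition Zg_vecs :: "nat \<Rightarrow> nat \<Rightarrow> (nat \<Rightarrow> int) set" where
  "Zg_vecs g k = PiE {1..k} (\<lambda>_. {0..<int g})"

definition Zmap :: "nat \<Rightarrow> (nat \<Rightarrow> int) \<Rightarrow> nat \<times> nat \<times> nat \<Rightarrow> real" where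
  "Zmap g x c = (case c of (i, j, a) \<Rightarrow>
     (if (x i - x j) mod int g = int a mod int g then 1 - 1 / real g else - 1 / real g))"

definition Phi :: "nat \<Rightarrow> nat \<Rightarrow> (nat \<times> nat \<times> nat \<Rightarrow> real) \<Rightarrow> complex" where
  "Phi g k \<theta> = (\<Sum>x\<in>Zg_vecs g k. complex_of_real (1 / real g ^ k) *
      cis (\<Sum>c\<in>coord_idx g k. \<theta> c * Zmap g x c))"

definition cube :: "nat \<Rightarrow> nat \<Rightarrow> (nat \<times> nat \<times> nat \<Rightarrow> real) set" where
  "cube g k = PiE (coord_idx g k) (\<lambda>_. {-pi..<pi})"

definition Lambda0 :: "nat \<Rightarrow> nat \<Rightarrow> (nat \<times> nat \<times> nat \<Rightarrow> real) set" where
  "Lambda0 g k = {\<theta> \<in> cube g k. norm (Phi g k \<theta>) = 1}"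

definition Bdelta :: "nat \<Rightarrow> nat \<Rightarrow> real \<Rightarrow> (nat \<times> nat \<times> nat \<Rightarrow> real) \<Rightarrow> (nat \<times> nat \<times> nat \<Rightarrow> real) set" where
  "Bdelta g k \<delta> \<theta> = {\<mu> \<in> cube g k. \<exists>\<zeta>. \<forall>c\<in>coord_idx g k.
      \<bar>\<zeta> c\<bar> < \<delta> \<and> (\<exists>m::int. \<mu> c = \<theta> c + \<zeta> c + 2 * pi * of_int m)}"

definition Lgrid :: "nat \<Rightarrow> nat \<Rightarrow> (nat \<times> nat \<times> nat \<Rightarrow> real) set" where
  "Lgrid g k = {\<theta> \<in> cube g k. \<forall>c\<in>coord_idx g k. \<exists>m::int. \<theta> c = 2 * pi * of_int m / real g}"

definition RA :: "nat \<Rightarrow> nat \<Rightarrow> real \<Rightarrow> (nat \<times> nat \<times> nat \<Rightarrow> real) set" where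
  "RA g k \<delta> = (\<Union>\<eta>\<in>Lgrid g k - Lambda0 g k. Bdelta g k \<delta> \<eta>)"

end

theory Submission
  imports Defs
begin

text \<open>Write \<open>\<theta> = 2\<pi>p/g + \<zeta>\<close> with \<open>p\<close> integral and \<open>|\<zeta>| < \<delta>\<close>. At a grid point the phase of
  the summand of \<open>\<Phi>\<close> indexed by \<open>x\<close> is \<open>2\<pi>N(x)/g\<close> minus a constant, where \<open>N(x)\<close> sums \<open>p\<close>
  over the coordinates at which \<open>Z(x)\<close> takes the value \<open>1 - 1/g\<close>. Because the grid point lies
  outside \<open>\<Lambda>\<close>, \<open>N\<close> is not constant mod \<open>g\<close>, so two summands have phases differing by
  \<open>2\<pi>r/g\<close> with \<open>g \<nmid> r\<close>; their sum has modulus at most \<open>2 - sin\<^sup>2(\<pi>r/g) \<le> 2 - 1/g\<^sup>2\<close>.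
  The perturbation \<open>\<zeta>\<close> moves every phase by at most \<open>\<delta>d\<close>, which for the given \<open>\<delta>\<close> eats up
  less than the saving.\<close>

lemma norm_cis_add_cis: "norm (cis a + cis b) = 2 * \<bar>cos ((a - b) / 2)\<bar>"
proof -
  have "cis a + cis b = cis ((a + b) / 2) * complex_of_real (2 * cos ((a - b) / 2))"
    unfolding complex_eq_iff by (simp add: sin_plus_sin cos_plus_cos)
  then show ?thesis by (simp add: norm_mult)
qed

lemma norm_cis_diff_cis: "norm (cis a - cis b) = 2 * \<bar>sin ((a - b) / 2)\<bar>"
proof -
  have "cis a - cis b = cis ((a + b) / 2) * (cis ((a - b) / 2) - cis (- ((a - b) / 2)))"
    by (simp add: right_diff_distrib cis_mult field_simps)
  also have "cis ((a - b) / 2) - cis (- ((a - b) / 2))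
      = \<i> * complex_of_real (2 * sin ((a - b) / 2))"
    by (simp add: complex_eq_iff)
  finally show ?thesis by (simp add: norm_mult)
qed

lemma norm_cis_diff_cis_le: "norm (cis a - cis b) \<le> \<bar>a - b\<bar>"
  using abs_sin_x_le_abs_x[of "(a - b) / 2"] by (simp add: norm_cis_diff_cis)

lemma norm_cis_add_cis_le: "norm (cis a + cis b) \<le> 2 - (sin ((a - b) / 2))\<^sup>2"
proof -
  let ?c = "cos ((a - b) / 2)"
  have "0 \<le> (1 - \<bar>?c\<bar>)\<^sup>2" by simp
  then have "2 * \<bar>?c\<bar> \<le> 1 + ?c\<^sup>2" by (simp add: power2_diff)
  moreover have "(sin ((a - b) / 2))\<^sup>2 + ?c\<^sup>2 = 1" by (rule sin_cos_squared_add)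
  ultimately show ?thesis unfolding norm_cis_add_cis by linarith
qed

lemma norm_cis_add_cis_perturb:
  "norm (cis (a + e) + cis (b + f)) \<le> norm (cis a + cis b) + \<bar>e\<bar> + \<bar>f\<bar>"
proof -
  have "cis (a + e) + cis (b + f) = (cis a + cis b) + (cis (a + e) - cis a) + (cis (b + f) - cis b)"
    by simp
  then have "norm (cis (a + e) + cis (b + f))
      \<le> norm (cis a + cis b) + norm (cis (a + e) - cis a) + norm (cis (b + f) - cis b)"
    by (metis norm_triangle_ineq add_right_mono order_trans)
  then show ?thesis
    using norm_cis_diff_cis_le[of "a + e" a] norm_cis_diff_cis_le[of "b + f" b] by simp
qed

lemma sin_ge_third:
  assumes "0 \<le> x" "x \<le> pi / 2"
  shows "x / 3 \<le> sin x"
proof -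
  have "\<bar>sin x - (\<Sum>m<3. sin_coeff m * x ^ m)\<bar> \<le> inverse (fact 3) * \<bar>x\<bar> ^ 3"
    by (rule Maclaurin_sin_bound)
  moreover have "(\<Sum>m<3. sin_coeff m * x ^ m) = x"
    by (simp add: numeral_3_eq_3 lessThan_Suc sin_coeff_def)
  ultimately have "\<bar>sin x - x\<bar> \<le> x ^ 3 / 6"
    using assms by (simp add: fact_numeral)
  then have taylor: "x - x ^ 3 / 6 \<le> sin x"
    unfolding abs_le_iff by linarith
  have "x\<^sup>2 \<le> (pi / 2)\<^sup>2" using assms by (simp add: power_mono)
  also have "\<dots> \<le> 4" using pi_less_4 mult_strict_mono[of pi 4 pi 4] by (simp add: power2_eq_square)
  finally have "x * x\<^sup>2 \<le> x * 4" using assms by (simp add: mult_left_mono)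
  then show ?thesis using taylor by (simp add: power3_eq_cube power2_eq_square)
qed

lemma sin_add_pi_int_squared: "(sin (x + pi * of_int n))\<^sup>2 = (sin x)\<^sup>2"
  by (simp add: sin_add power_mult_distrib)

lemma sin_pi_div_squared_ge:
  fixes g :: nat and r :: int
  assumes "g \<ge> 2" and "\<not> int g dvd r"
  shows "1 / (real g)\<^sup>2 \<le> (sin (pi * r / g))\<^sup>2"
proof -
  define s where "s = r mod int g"
  define t where "t = min s (int g - s)"
  have s: "0 < s" "s < int g"
    using assms by (auto simp: s_def dvd_eq_mod_eq_0 order_le_neq_trans)
  have t: "1 \<le> t" "2 * t \<le> int g" using s by (auto simp: t_def min_def)
  have gpos: "real g > 0" using assms(1) by simp
  have "real_of_int r = s + real g * of_int (r div int g)"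
    unfolding s_def by (metis mod_mult_div_eq of_int_add of_int_mult of_int_of_nat_eq)
  then have "pi * r / g = pi * s / g + pi * of_int (r div int g)"
    using gpos by (simp add: field_simps)
  then have "(sin (pi * r / g))\<^sup>2 = (sin (pi * s / g))\<^sup>2"
    by (simp only: sin_add_pi_int_squared)
  also have "sin (pi * s / g) = sin (pi * t / g)"
  proof -
    have "pi * of_int (int g - s) / g = pi - pi * s / g" using gpos by (simp add: field_simps)
    then show ?thesis by (simp add: t_def min_def)
  qed
  finally have eq: "(sin (pi * r / g))\<^sup>2 = (sin (pi * t / g))\<^sup>2" .
  have "real_of_int (2 * t) \<le> real g" using t(2) by linarith
  then have "pi * t / g \<le> pi / 2" using gpos by (simp add: field_simps)
  then have "pi * t / g / 3 \<le> sin (pi * t / g)"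
    by (rule sin_ge_third[rotated]) (use t gpos in simp)
  moreover have "1 / g \<le> pi * t / g / 3"
    using pi_gt3 t(1) gpos mult_mono[of 3 pi 1 "real_of_int t"] by (simp add: field_simps)
  ultimately have "1 / g \<le> sin (pi * t / g)" by linarith
  then have "(1 / g)\<^sup>2 \<le> (sin (pi * t / g))\<^sup>2" using gpos by (intro power_mono) auto
  then show ?thesis by (simp add: eq power_divide)
qed

lemma norm_sum_le_card_minus_two:
  fixes w :: "'a \<Rightarrow> 'b::real_normed_vector"
  assumes "finite X" "a \<in> X" "b \<in> X" "a \<noteq> b" "\<And>x. x \<in> X \<Longrightarrow> norm (w x) \<le> 1"
  shows "norm (\<Sum>x\<in>X. w x) \<le> real (card X) - 2 + norm (w a + w b)"
proof -
  have "(\<Sum>x\<in>X. w x) = w a + w b + (\<Sum>x\<in>X - {a, b}. w x)"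
    using sum.subset_diff[of "{a, b}" X w] assms by (simp add: add.commute)
  moreover have "norm (\<Sum>x\<in>X - {a, b}. w x) \<le> real (card (X - {a, b}))"
    using sum_norm_le[of "X - {a, b}" w "\<lambda>_. 1"] assms(5) by simp
  moreover have "card (X - {a, b}) = card X - 2" "2 \<le> card X"
    using assms card_mono[of X "{a, b}"] by (auto simp: card_Diff_subset)
  ultimately show ?thesis
    using norm_triangle_ineq[of "w a + w b" "\<Sum>x\<in>X - {a, b}. w x"] by (simp add: of_nat_diff)
qed

lemma card_coord_idx_le: "card (coord_idx g k) \<le> k * k * g"
proof -
  have "card (coord_idx g k) \<le> card ({1..k} \<times> {1..k} \<times> {1..g})"
    by (rule card_mono) (auto simp: coord_idx_def)
  then show ?thesis by (simp add: card_cartesian_product)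
qed

lemma finite_Zg_vecs: "finite (Zg_vecs g k)"
  unfolding Zg_vecs_def by (rule finite_PiE) auto

lemma card_Zg_vecs: "card (Zg_vecs g k) = g ^ k"
  unfolding Zg_vecs_def by (simp add: card_PiE)

definition diff_hit :: "nat \<Rightarrow> (nat \<Rightarrow> int) \<Rightarrow> nat \<times> nat \<times> nat \<Rightarrow> bool" where
  "diff_hit g x c \<longleftrightarrow> (case c of (i, j, a) \<Rightarrow> (x i - x j) mod int g = int a mod int g)"

definition hit_sum :: "nat \<Rightarrow> nat \<Rightarrow> (nat \<times> nat \<times> nat \<Rightarrow> int) \<Rightarrow> (nat \<Rightarrow> int) \<Rightarrow> int" where
  "hit_sum g k q x = (\<Sum>c\<in>coord_idx g k. if diff_hit g x c then q c else 0)"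

lemma Zmap_eq_diff_hit: "Zmap g x c = of_bool (diff_hit g x c) - 1 / real g"
  by (cases c) (simp add: Zmap_def diff_hit_def)

lemma abs_Zmap_le: "g \<ge> 1 \<Longrightarrow> \<bar>Zmap g x c\<bar> \<le> 1"
  by (simp add: Zmap_eq_diff_hit)

lemma hit_sum_add_mult:
  "hit_sum g k (\<lambda>c. n c + int g * m c) x = hit_sum g k n x + int g * hit_sum g k m x"
  unfolding hit_sum_def sum_distrib_left sum.distrib[symmetric] by (rule sum.cong) auto

lemma phase_grid:
  assumes "g > 0"
  shows "(\<Sum>c\<in>coord_idx g k. 2 * pi * q c / g * Zmap g x c)
    = 2 * pi * hit_sum g k q x / g - 2 * pi / (real g)\<^sup>2 * (\<Sum>c\<in>coord_idx g k. real_of_int (q c))"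
proof -
  have "2 * pi * q c / g * Zmap g x c
      = 2 * pi / g * real_of_int (if diff_hit g x c then q c else 0)
        - 2 * pi / (real g)\<^sup>2 * q c" for c
    using assms by (simp add: Zmap_eq_diff_hit field_simps power2_eq_square)
  then have "(\<Sum>c\<in>coord_idx g k. 2 * pi * q c / g * Zmap g x c)
      = (\<Sum>c\<in>coord_idx g k. 2 * pi / g * real_of_int (if diff_hit g x c then q c else 0)
           - 2 * pi / (real g)\<^sup>2 * q c)"
    by presburger
  then show ?thesis
    unfolding sum_subtractf sum_distrib_left[symmetric] hit_sum_def of_int_sum by simp
qed

lemma norm_Phi_grid_eq_1:
  assumes "g > 0"
    and grid: "\<And>c. c \<in> coord_idx g k \<Longrightarrow> \<eta> c = 2 * pi * n c / g"
    and dvd: "\<And>x y. x \<in> Zg_vecs g k \<Longrightarrow> y \<in> Zg_vecs g k \<Longrightarrow>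
      int g dvd hit_sum g k n x - hit_sum g k n y"
  shows "norm (Phi g k \<eta>) = 1"
proof -
  define K where "K = 2 * pi / (real g)\<^sup>2 * (\<Sum>c\<in>coord_idx g k. real_of_int (n c))"
  have "Zg_vecs g k \<noteq> {}" using card_Zg_vecs[of g k] assms(1) by auto
  then obtain x0 where x0: "x0 \<in> Zg_vecs g k" by blast
  have cis_phase:
    "cis (\<Sum>c\<in>coord_idx g k. \<eta> c * Zmap g x c) = cis (2 * pi * hit_sum g k n x0 / g - K)"
    if x: "x \<in> Zg_vecs g k" for x
  proof -
    from dvd[OF x x0] obtain t where t: "hit_sum g k n x - hit_sum g k n x0 = int g * t"
      by (rule dvdE)
    have "(\<Sum>c\<in>coord_idx g k. \<eta> c * Zmap g x c) = (\<Sum>c\<in>coord_idx g k. 2 * pi * n c / g * Zmap g x c)"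
      by (simp add: grid)
    also have "\<dots> = 2 * pi * hit_sum g k n x / g - K"
      unfolding K_def by (rule phase_grid[OF assms(1)])
    also have "\<dots> = (2 * pi * hit_sum g k n x0 / g - K) + 2 * pi * t"
      using assms(1) arg_cong[OF t, of real_of_int] by (simp add: field_simps)
    finally show ?thesis by (simp flip: cis_mult)
  qed
  have "Phi g k \<eta>
      = (\<Sum>x\<in>Zg_vecs g k. complex_of_real (1 / real g ^ k) * cis (2 * pi * hit_sum g k n x0 / g - K))"
    unfolding Phi_def by (rule sum.cong) (simp_all add: cis_phase)
  also have "\<dots> = cis (2 * pi * hit_sum g k n x0 / g - K)"
    using assms(1) by (simp add: card_Zg_vecs)
  finally show ?thesis by simp
qed

lemma RA_near_grid:
  assumes "g > 0" and "\<theta> \<in> RA g k \<delta>"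
  obtains p \<zeta> x0 y0
  where "\<And>c. c \<in> coord_idx g k \<Longrightarrow> \<theta> c = 2 * pi * p c / g + \<zeta> c \<and> \<bar>\<zeta> c\<bar> < \<delta>"
    and "x0 \<in> Zg_vecs g k" "y0 \<in> Zg_vecs g k" "\<not> int g dvd hit_sum g k p x0 - hit_sum g k p y0"
proof -
  from assms(2) obtain \<eta> where \<eta>: "\<eta> \<in> Lgrid g k" "\<eta> \<notin> Lambda0 g k" "\<theta> \<in> Bdelta g k \<delta> \<eta>"
    unfolding RA_def by auto
  then obtain \<zeta> where \<zeta>: "\<forall>c\<in>coord_idx g k. \<bar>\<zeta> c\<bar> < \<delta> \<and> (\<exists>m::int. \<theta> c = \<eta> c + \<zeta> c + 2 * pi * m)"
    unfolding Bdelta_def by auto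
  then have "\<forall>c\<in>coord_idx g k. \<exists>m::int. \<theta> c = \<eta> c + \<zeta> c + 2 * pi * m" by simp
  then obtain m where m: "\<forall>c\<in>coord_idx g k. \<theta> c = \<eta> c + \<zeta> c + 2 * pi * of_int (m c)"
    by (rule bchoice[THEN exE])
  from \<eta>(1) have "\<forall>c\<in>coord_idx g k. \<exists>n::int. \<eta> c = 2 * pi * n / g"
    by (simp add: Lgrid_def)
  then obtain n where n: "\<forall>c\<in>coord_idx g k. \<eta> c = 2 * pi * of_int (n c) / g"
    by (rule bchoice[THEN exE])
  define p where "p c = n c + int g * m c" for c
  have near: "\<theta> c = 2 * pi * p c / g + \<zeta> c \<and> \<bar>\<zeta> c\<bar> < \<delta>" if "c \<in> coord_idx g k" for c
    using that m n \<zeta> assms(1) by (simp add: p_def field_simps)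
  have "\<exists>x0\<in>Zg_vecs g k. \<exists>y0\<in>Zg_vecs g k. \<not> int g dvd hit_sum g k n x0 - hit_sum g k n y0"
  proof (rule ccontr)
    assume "\<not> ?thesis"
    then have "norm (Phi g k \<eta>) = 1" using n assms(1) by (intro norm_Phi_grid_eq_1) auto
    with \<eta>(1,2) show False by (simp add: Lambda0_def Lgrid_def)
  qed
  then obtain x0 y0 where xy: "x0 \<in> Zg_vecs g k" "y0 \<in> Zg_vecs g k"
    and nd: "\<not> int g dvd hit_sum g k n x0 - hit_sum g k n y0" by blast
  have "hit_sum g k p x0 - hit_sum g k p y0
      = hit_sum g k n x0 - hit_sum g k n y0 + int g * (hit_sum g k m x0 - hit_sum g k m y0)"
    unfolding p_def hit_sum_add_mult by (simp add: algebra_simps)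
  with nd have "\<not> int g dvd hit_sum g k p x0 - hit_sum g k p y0"
    by (simp add: dvd_add_left_iff)
  with near xy show thesis by (rule that)
qed

lemma norm_Phi_near_grid_le:
  fixes \<epsilon> :: real
  assumes "g \<ge> 2"
    and near: "\<And>c. c \<in> coord_idx g k \<Longrightarrow> \<theta> c = 2 * pi * p c / g + \<zeta> c \<and> \<bar>\<zeta> c\<bar> \<le> \<epsilon>"
    and xy: "x0 \<in> Zg_vecs g k" "y0 \<in> Zg_vecs g k"
    and nd: "\<not> int g dvd hit_sum g k p x0 - hit_sum g k p y0"
  shows "norm (Phi g k \<theta>) \<le> 1 - (1 / (real g)\<^sup>2 - 2 * \<epsilon> * card (coord_idx g k)) / real g ^ k"
proof -
  let ?C = "coord_idx g k" and ?X = "Zg_vecs g k"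
  have gpos: "g > 0" using assms(1) by simp
  define K where "K = 2 * pi / (real g)\<^sup>2 * (\<Sum>c\<in>?C. real_of_int (p c))"
  define A where "A x = 2 * pi * hit_sum g k p x / g - K" for x
  define E where "E x = (\<Sum>c\<in>?C. \<zeta> c * Zmap g x c)" for x
  have phase: "(\<Sum>c\<in>?C. \<theta> c * Zmap g x c) = A x + E x" for x
  proof -
    have "(\<Sum>c\<in>?C. \<theta> c * Zmap g x c) = (\<Sum>c\<in>?C. 2 * pi * p c / g * Zmap g x c + \<zeta> c * Zmap g x c)"
      using near by (simp add: distrib_right)
    then show ?thesis by (simp only: sum.distrib phase_grid[OF gpos]) (simp add: A_def K_def E_def)
  qed
  have E_le: "\<bar>E x\<bar> \<le> \<epsilon> * card ?C" for x
  proof -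
    have "\<bar>E x\<bar> \<le> (\<Sum>c\<in>?C. \<bar>\<zeta> c\<bar> * \<bar>Zmap g x c\<bar>)"
      unfolding E_def abs_mult[symmetric] by (rule sum_abs)
    also have "\<dots> \<le> (\<Sum>c\<in>?C. \<epsilon>)"
    proof (rule sum_mono)
      fix c assume "c \<in> ?C"
      then show "\<bar>\<zeta> c\<bar> * \<bar>Zmap g x c\<bar> \<le> \<epsilon>"
        using near[of c] abs_Zmap_le[of g x c] gpos mult_left_le[of "\<bar>Zmap g x c\<bar>" "\<bar>\<zeta> c\<bar>"] by simp
    qed
    finally show ?thesis by (simp add: mult.commute)
  qed
  have "(A x0 - A y0) / 2 = pi * of_int (hit_sum g k p x0 - hit_sum g k p y0) / g"
    using gpos by (simp add: A_def field_simps)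
  then have sin_ge: "1 / (real g)\<^sup>2 \<le> (sin ((A x0 - A y0) / 2))\<^sup>2"
    using sin_pi_div_squared_ge[OF assms(1) nd] by simp
  have "norm (\<Sum>x\<in>?X. cis (A x + E x))
      \<le> real (card ?X) - 2 + norm (cis (A x0 + E x0) + cis (A y0 + E y0))"
    using xy nd by (intro norm_sum_le_card_minus_two) (auto simp: finite_Zg_vecs)
  also have "\<dots> \<le> real g ^ k - 1 / (real g)\<^sup>2 + 2 * \<epsilon> * card ?C"
    using norm_cis_add_cis_perturb[of "A x0" "E x0" "A y0" "E y0"]
      norm_cis_add_cis_le[of "A x0" "A y0"] sin_ge E_le[of x0] E_le[of y0] by (simp add: card_Zg_vecs)
  finally have bound: "norm (\<Sum>x\<in>?X. cis (A x + E x))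
      \<le> real g ^ k - (1 / (real g)\<^sup>2 - 2 * \<epsilon> * card ?C)"
    by simp
  have "Phi g k \<theta> = complex_of_real (1 / real g ^ k) * (\<Sum>x\<in>?X. cis (A x + E x))"
    unfolding Phi_def by (simp add: phase sum_distrib_left)
  then have "norm (Phi g k \<theta>) = norm (\<Sum>x\<in>?X. cis (A x + E x)) / real g ^ k"
    by (simp add: norm_divide norm_power)
  also have "\<dots> \<le> (real g ^ k - (1 / (real g)\<^sup>2 - 2 * \<epsilon> * card ?C)) / real g ^ k"
    using bound by (rule divide_right_mono) simp
  finally show ?thesis
    using gpos by (simp add: diff_divide_distrib)
qed

lemma perturbation_le:
  assumes "g \<ge> 2" and "k \<ge> 2"
    and "0 < \<delta>" and "\<delta> < 8 / 5 * (1 / real g ^ (k + 3)) * (1 / real k ^ 2)"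
  shows "2 * \<delta> * card (coord_idx g k) / real g ^ k \<le> 4 / 5 * (1 / real g ^ (k + 2))"
proof -
  define G where "G = real g ^ k"
  define u where "u = 1 / real g ^ (k + 2)"
  have "(2::real) ^ 2 \<le> 2 ^ k" by (rule power_increasing) (use assms(2) in auto)
  also have "\<dots> \<le> G" unfolding G_def by (rule power_mono) (use assms(1) in auto)
  finally have G: "4 \<le> G" by simp
  have "0 < u" using assms(1) by (simp add: u_def)
  have "2 * \<delta> * card (coord_idx g k) \<le> 2 * \<delta> * (real k ^ 2 * g)"
    using card_coord_idx_le[of g k] assms(3) by (simp add: power2_eq_square flip: of_nat_mult)
  also have "\<dots> < 2 * (8 / 5 * (1 / real g ^ (k + 3)) * (1 / real k ^ 2)) * (real k ^ 2 * g)"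
    using assms(1,2,4) by (intro mult_strict_left_mono mult_strict_right_mono) auto
  also have "\<dots> = 16 / 5 * u"
    using assms(1,2) by (simp add: u_def power_add eval_nat_numeral field_simps)
  also have "\<dots> \<le> 4 / 5 * u * G"
    using mult_left_mono[OF G, of "4 / 5 * u"] \<open>0 < u\<close> by simp
  finally show ?thesis
    using G assms(1) by (subst pos_divide_le_eq) (auto simp: G_def u_def)
qed

theorem lemma3p1:
  fixes g k :: nat and \<delta> :: real and \<theta> :: "nat \<times> nat \<times> nat \<Rightarrow> real"
  assumes "g \<ge> 2" and "k \<ge> 2"
    and "0 < \<delta>" and "\<delta> < 8 / 5 * (1 / real g ^ (k + 3)) * (1 / real k ^ 2)"
    and "\<theta> \<in> RA g k \<delta>"
  shows "norm (Phi g k \<theta>) \<le> 1 - 1 / 10 * (1 / real g ^ (k + 2))"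
proof -
  have "g > 0" "0 < 1 / real g ^ (k + 2)" using assms(1) by simp_all
  obtain p \<zeta> x0 y0
    where near: "\<And>c. c \<in> coord_idx g k \<Longrightarrow> \<theta> c = 2 * pi * p c / g + \<zeta> c \<and> \<bar>\<zeta> c\<bar> < \<delta>"
      and "x0 \<in> Zg_vecs g k" "y0 \<in> Zg_vecs g k"
      and "\<not> int g dvd hit_sum g k p x0 - hit_sum g k p y0"
    using RA_near_grid[OF \<open>g > 0\<close> assms(5)] by blast
  then have "norm (Phi g k \<theta>)
      \<le> 1 - (1 / (real g)\<^sup>2 - 2 * \<delta> * card (coord_idx g k)) / real g ^ k"
    using assms(1) by (intro norm_Phi_near_grid_le[where \<zeta> = \<zeta>]) (auto dest: near)
  also have "\<dots> = 1 - 1 / real g ^ (k + 2) + 2 * \<delta> * card (coord_idx g k) / real g ^ k"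
    by (simp add: diff_divide_distrib power_add power2_eq_square mult.commute)
  finally show ?thesis
    using perturbation_le[OF assms(1-4)] \<open>0 < 1 / real g ^ (k + 2)\<close> by linarith
qed

end
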